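(* Assume (A2). Suppose there is a deterministic $\delta>0$ such that for every $x\in\mathbb Z^d$, $P$-a.s., $$\inf_{f:\{\pm e_i\}_{i=1}^d\to(0,1]}\left[E\Big(\frac{1}{\sum_{|e|=1}f(e)\,\omega(x,x+e)}\ \Big|\ \mathcal F_{\{x\}^c}\Big)^{-1}E\Big(\frac{d(x,\omega)\cdot\ell}{\sum_{|e|=1}f(e)\,\omega(x,x+e)}\ \Big|\ \mathcal F_{\{x\}^c}\Big)\right]\ge\delta .$$ Then (A3) holds for $\ell$ with $\delta(\ell)=\delta$.
   Context: Let $d\ge 1$ and let $S$ be the set of probability vectors $(p(e))_{e\in\mathbb Z^d,|e|=1}$ on the $2d$ nearest-neighbour unit vectors of $\mathbb Z^d$. Let $\Omega=S^{\mathbb Z^d}$. For $\omega\in\Omega$ and $z\in\mathbb Z^d$ write $\omega(z,z+e)$ for the $e$-coordinate of $\omega_z$. For $\omega\in\Omega$ and $z\in\mathbb Z^d$, the quenched law $P^z_\omega$ is the law of the Markov chain $(X_n)_{n\ge0}$ on $\mathbb Z^d$ with $X_0=z$ and $P^z_\omega(X_{n+1}=x+e\mid X_n=x)=\omega(x,x+e)$ for $|e|=1$. $P$ is a probability measure on $\Omega$ which is stationary and ergodic with respect to the spatial shifts of $\mathbb Z^d$; $E$ is expectation under $P$. The annealed law is $\mathbb P^z=P\otimes P^z_\omega$; $\mathbb E^z$ is its expectation. Fix $\ell\in\mathbb Z^d\setminus\{0\}$ with integer coordinates and let $\mathcal E=\{\mathrm{sgn}(\ell_i)e_i\}_{i=1}^d\setminus\{0\}$,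 where $e_1,\dots,e_d$ are the canonical unit vectors and $\mathrm{sgn}(0)=0$. The local drift is $d(x,\omega)=\sum_{|e|=1}e\,\omega(x,x+e)$. For $\Lambda\subset\mathbb Z^d$, $\mathcal F_\Lambda=\sigma(\omega_z:z\in\Lambda)$. (A2) $P(\omega(0,e)>0\text{ for all }|e|=1)=1$, and there is $\kappa>0$ with $P(\min_{e\in\mathcal E}\omega(0,e)\ge\kappa)=1$. Kalikow's chain: for a finite connected $U\subset\mathbb Z^d$ with $0\in U$, let $\partial U$ be its outer vertex boundary, $T_{U^c}=\min\{n\ge0:X_n\in\partial U\}$ and $\mathcal F_{U^c}=\sigma(\omega_z:z\notin U)$. Kalikow's chain is the Markov chain on $U\cup\partial U$ with transition probabilities $\hat P_U(x,x+e)=\mathbb E^0[\sum_{n=0}^{T_{U^c}}1_{\{X_n=x\}}\omega(x,x+e)\mid\mathcal F_{U^c}]\,/\,\mathbb E^0[\sum_{n=0}^{T_{U^c}}1_{\{X_n=x\}}\mid\mathcal F_{U^c}]$ for $x\in U$, $|e|=1$, and $\hat P_U(x,x)=1$ for $x\in\partial U$ (it depends on $\omega$ outside $U$). The Kalikow drift is $\hat d_U(x)=\sum_{|e|=1}e\,\hat P_U(x,x+e)$. (A3) (Kalikow's condition) There is a deterministic $\delta(\ell)>0$ with $\inf_{U,\,x\in U}\hat d_U(x)\cdot\ell\ge\delta(\ell)$ $P$-a.s., the infimum over all finite connected $U\subset\mathbb Z^d$ containing $0$. *)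

theory Defs
  imports "HOL-Probability.Probability"
begin

text \<open>Sites of the lattice Z^d are vectors int^'d ('d a finite index type, d = CARD('d)).
  An environment is w :: site => site => real, where w z e is the e-coordinate of w_z,
  i.e. w(z,z+e), for e a nearest-neighbour unit vector.\<close>

type_synonym 'd site = "int ^ 'd"
type_synonym 'd env = "'d site \<Rightarrow> 'd site \<Rightarrow> real"

definition units :: "'d::finite site set" where
  "units = {e. \<exists>i. e = axis i 1 \<or> e = axis i (-1)}"

definition dotZ :: "'d::finite site \<Rightarrow> 'd site \<Rightarrow> int" where
  "dotZ a b = (\<Sum>i\<in>UNIV. a $ i * b $ i)"

definition Edirs :: "'d::finite site \<Rightarrow> 'd site set" where
  "Edirs l = {axis i (sgn (l $ i)) | i. l $ i \<noteq> 0}"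

definition Omega_M :: "'d::finite env measure" where
  "Omega_M = (\<Pi>\<^sub>M z\<in>UNIV. \<Pi>\<^sub>M e\<in>UNIV. borel)"

definition Fsig :: "'d::finite site set \<Rightarrow> 'd env measure" where
  "Fsig L = vimage_algebra (space Omega_M) (\<lambda>w. restrict w L) (\<Pi>\<^sub>M z\<in>L. \<Pi>\<^sub>M e\<in>UNIV. borel)"

definition shift :: "'d::finite site \<Rightarrow> 'd env \<Rightarrow> 'd env" where
  "shift y w = (\<lambda>z. w (z + y))"

definition stationary :: "'d::finite env measure \<Rightarrow> bool" where
  "stationary P \<longleftrightarrow> (\<forall>y. distr P Omega_M (shift y) = P)"

definition ergodic :: "'d::finite env measure \<Rightarrow> bool" where
  "ergodic P \<longleftrightarrow> (\<forall>A\<in>sets P. (\<forall>y. shift y -` A \<inter> space P = A)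
                      \<longrightarrow> emeasure P A = 0 \<or> emeasure P A = 1)"

definition drift_dot :: "'d::finite site \<Rightarrow> 'd site \<Rightarrow> 'd env \<Rightarrow> real" where
  "drift_dot l x w = (\<Sum>e\<in>units. real_of_int (dotZ e l) * w x e)"

definition qstep :: "'d::finite env \<Rightarrow> 'd site \<Rightarrow> 'd site \<Rightarrow> real" where
  "qstep w a b = (if b - a \<in> units then w a (b - a) else 0)"

text \<open>qpath w U n a b = P^a_w(X_n = b, X_k in U for all k < n).\<close>
fun qpath :: "'d::finite env \<Rightarrow> 'd site set \<Rightarrow> nat \<Rightarrow> 'd site \<Rightarrow> 'd site \<Rightarrow> real" where
  "qpath w U 0 a b = (if a = b then 1 else 0)"
| "qpath w U (Suc n) a b = (\<Sum>y\<in>U. qpath w U n a y * qstep w y b)"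

text \<open>Quenched occupation: E^0_w[sum_{n=0}^{T_{U^c}} 1{X_n = x}] for x in U
  (for x in U the event {X_n = x, n <= T_{U^c}} is {X_n = x, X_k in U for k < n}).\<close>
definition green :: "'d::finite env \<Rightarrow> 'd site set \<Rightarrow> 'd site \<Rightarrow> real" where
  "green w U x = (\<Sum>n. qpath w U n 0 x)"

definition nn_connected :: "'d::finite site set \<Rightarrow> bool" where
  "nn_connected U \<longleftrightarrow> (\<forall>a\<in>U. \<forall>b\<in>U.
     (\<lambda>y z. y \<in> U \<and> z \<in> U \<and> z - y \<in> units)\<^sup>*\<^sup>* a b)"

text \<open>The annealed conditional expectation E^0[. | F_{U^c}] of a quenched-path functional equals
  E[E^0_w[.] | F_{U^c}] since F_{U^c} only involves the environment.\<close>
definition kalikowP :: "'d::finite env measure \<Rightarrow> 'd site set \<Rightarrow> 'd site \<Rightarrow> 'd site \<Rightarrow> 'd env \<Rightarrow> real" where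
  "kalikowP P U x e w =
     real_cond_exp P (Fsig (- U)) (\<lambda>w'. green w' U x * w' x e) w
     / real_cond_exp P (Fsig (- U)) (\<lambda>w'. green w' U x) w"

definition kalikow_drift_dot :: "'d::finite env measure \<Rightarrow> 'd site \<Rightarrow> 'd site set \<Rightarrow> 'd site \<Rightarrow> 'd env \<Rightarrow> real" where
  "kalikow_drift_dot P l U x w = (\<Sum>e\<in>units. real_of_int (dotZ e l) * kalikowP P U x e w)"

end

theory Submission
  imports Defs
begin

text \<open>Fix x \<in> U. Cutting the paths of the walk killed on leaving U at their first visit
  to x gives green = h(0) / S, where h(y) is the probability of reaching x from y before
  leaving U and S = \<Sum>e. \<omega>(x,x+e) (1 - h(x+e)) is the escape probability from x. Neither
  h(0) nor the weights f(e) = 1 - h(x+e) depend on \<omega>(x), so conditioning on F(-{x}) and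
  applying the hypothesis with these weights gives E[green (d(x,\<omega>)\<cdot>l - \<delta>); C] \<ge> 0 for
  every C in F(-{x}), in particular for every C in F(-U). This says
  E[green d(x,\<omega>)\<cdot>l | F(-U)] \<ge> \<delta> E[green | F(-U)], which is Kalikow's bound.
  Ellipticity along one direction of E, spread to all sites by stationarity, makes the walk
  leave U geometrically fast, so green is bounded and all expectations are finite.\<close>

lemma units_eq: "(units :: 'd::finite site set) = range (\<lambda>i. axis i 1) \<union> range (\<lambda>i. axis i (-1))"
  unfolding units_def by auto

lemma finite_units [simp]: "finite (units :: 'd::finite site set)"
  unfolding units_eq by simp

lemma units_nonempty: "(units :: 'd::finite site set) \<noteq> {}"
  unfolding units_def by auto

lemma zero_notin_units [simp]: "(0::'d::finite site) \<notin> units"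
  unfolding units_def by (auto simp: axis_eq_0_iff)

lemma Edirs_subset_units: "Edirs l \<subseteq> units"
  unfolding Edirs_def units_def by (auto simp: sgn_if)

lemma Edirs_nonempty: "l \<noteq> 0 \<Longrightarrow> Edirs l \<noteq> {}"
  unfolding Edirs_def by (auto simp: vec_eq_iff)

definition stochastic_env :: "'d::finite env \<Rightarrow> bool" where
  "stochastic_env w \<longleftrightarrow> (\<forall>z. (\<forall>e\<in>units. 0 \<le> w z e) \<and> (\<Sum>e\<in>units. w z e) = 1)"

lemma stochastic_env_sum: "stochastic_env w \<Longrightarrow> (\<Sum>e\<in>units. w z e) = 1"
  unfolding stochastic_env_def by blast

lemma stochastic_env_nonneg: "stochastic_env w \<Longrightarrow> e \<in> units \<Longrightarrow> 0 \<le> w z e"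
  unfolding stochastic_env_def by blast

lemma stochastic_env_le_one:
  assumes "stochastic_env w" "e \<in> units"
  shows "w z e \<le> 1"
proof -
  have "w z e \<le> (\<Sum>e\<in>units. w z e)"
    using assms by (intro member_le_sum) (auto simp: stochastic_env_nonneg)
  then show ?thesis using stochastic_env_sum[OF assms(1)] by simp
qed

definition jump_mean :: "'d::finite site \<Rightarrow> ('d site \<Rightarrow> real) \<Rightarrow> 'd env \<Rightarrow> real" where
  "jump_mean x f w = (\<Sum>e\<in>units. f e * w x e)"

lemma jump_mean_mono:
  assumes "stochastic_env w" "\<And>e. e \<in> units \<Longrightarrow> f e \<le> g e"
  shows "jump_mean x f w \<le> jump_mean x g w"
  unfolding jump_mean_def using assms by (intro sum_mono mult_right_mono stochastic_env_nonneg) auto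

lemma jump_mean_const: "stochastic_env w \<Longrightarrow> jump_mean x (\<lambda>_. c) w = c"
  unfolding jump_mean_def by (simp add: sum_distrib_left[symmetric] stochastic_env_sum)

lemma jump_mean_bounds:
  assumes "stochastic_env w" "\<And>e. e \<in> units \<Longrightarrow> a \<le> f e \<and> f e \<le> b"
  shows "a \<le> jump_mean x f w" "jump_mean x f w \<le> b"
  using jump_mean_mono[OF assms(1), of "\<lambda>_. a" f x] jump_mean_mono[OF assms(1), of f "\<lambda>_. b" x]
    assms by (auto simp: jump_mean_const)

definition drift_norm :: "'d::finite site \<Rightarrow> real" where
  "drift_norm l = (\<Sum>e\<in>units. \<bar>real_of_int (dotZ e l)\<bar>)"

lemma abs_drift_dot_le:
  assumes "stochastic_env w"
  shows "\<bar>drift_dot l x w\<bar> \<le> drift_norm l"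
proof -
  have "\<bar>drift_dot l x w\<bar> \<le> (\<Sum>e\<in>units. \<bar>real_of_int (dotZ e l) * w x e\<bar>)"
    unfolding drift_dot_def by (rule sum_abs)
  also have "\<dots> \<le> drift_norm l"
    unfolding drift_norm_def using assms
    by (intro sum_mono) (simp add: abs_mult mult_left_le stochastic_env_nonneg stochastic_env_le_one)
  finally show ?thesis .
qed

lemma abs_drift_excess_le:
  "stochastic_env w \<Longrightarrow> \<bar>drift_dot l x w - c\<bar> \<le> drift_norm l + \<bar>c\<bar>"
  using abs_drift_dot_le[of w l x] abs_triangle_ineq4[of "drift_dot l x w" c] by linarith

lemma abs_drift_excess_div_le:
  assumes "stochastic_env w" "0 < m" "m \<le> S"
  shows "\<bar>(drift_dot l x w - c) / S\<bar> \<le> (drift_norm l + \<bar>c\<bar>) / m"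
proof -
  have num: "\<bar>drift_dot l x w - c\<bar> \<le> drift_norm l + \<bar>c\<bar>"
    using assms(1) by (rule abs_drift_excess_le)
  have "\<bar>(drift_dot l x w - c) / S\<bar> \<le> (drift_norm l + \<bar>c\<bar>) / S"
    using num assms(2,3) by (simp add: abs_divide divide_right_mono)
  also have "\<dots> \<le> (drift_norm l + \<bar>c\<bar>) / m"
    using num assms(2,3) by (intro divide_left_mono) auto
  finally show ?thesis .
qed

lemma Min_image_units_pos: "\<forall>e\<in>units. 0 < q e \<Longrightarrow> 0 < Min (q ` units)"
  using units_nonempty by (subst Min_gr_iff) auto

section \<open>The random walk killed on leaving a set\<close>

declare qpath.simps(2) [simp del]

lemma qpath_Suc: "qpath w U (Suc n) a b = (\<Sum>y\<in>U. qpath w U n a y * qstep w y b)"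
  by (fact qpath.simps(2))

lemma qstep_nonneg: "stochastic_env w \<Longrightarrow> 0 \<le> qstep w a b"
  unfolding qstep_def by (auto simp: stochastic_env_nonneg)

lemma qpath_nonneg: "stochastic_env w \<Longrightarrow> 0 \<le> qpath w U n a b"
  by (induction n arbitrary: b) (auto simp: qpath_Suc intro!: sum_nonneg mult_nonneg_nonneg qstep_nonneg)

lemma sum_qstep_le_one:
  assumes "stochastic_env w" "finite C"
  shows "(\<Sum>c\<in>C. qstep w y c) \<le> 1"
proof -
  have "(\<Sum>c\<in>C. qstep w y c) = (\<Sum>c\<in>C \<inter> (\<lambda>e. y + e) ` units. w y (c - y))"
    by (rule sum.mono_neutral_cong_right)
       (auto simp: qstep_def assms(2) image_iff intro!: bexI[where x="_ - y"])
  also have "\<dots> = (\<Sum>e\<in>(\<lambda>c. c - y) ` (C \<inter> (\<lambda>e. y + e) ` units). w y e)"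
    by (subst sum.reindex) (auto simp: inj_on_def)
  also have "\<dots> \<le> (\<Sum>e\<in>units. w y e)"
    using assms by (intro sum_mono2) (auto simp: stochastic_env_nonneg)
  finally show ?thesis using stochastic_env_sum[OF assms(1)] by simp
qed

lemma sum_qstep_eq_jump_mean:
  assumes "finite U" "\<And>y. y \<notin> U \<Longrightarrow> y \<noteq> x \<Longrightarrow> g y = 0"
  shows "(\<Sum>y\<in>U. qstep w x y * g y) = jump_mean x (\<lambda>e. g (x + e)) w"
proof -
  have "jump_mean x (\<lambda>e. g (x + e)) w = (\<Sum>y\<in>(\<lambda>e. x + e) ` units. qstep w x y * g y)"
    unfolding jump_mean_def by (subst sum.reindex) (auto simp: inj_on_def qstep_def intro!: sum.cong)
  also have "\<dots> = (\<Sum>y\<in>U \<inter> (\<lambda>e. x + e) ` units. qstep w x y * g y)"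
    using assms(2) by (intro sum.mono_neutral_right) force+
  also have "\<dots> = (\<Sum>y\<in>U. qstep w x y * g y)"
    by (rule sum.mono_neutral_left) (auto simp: assms qstep_def image_iff intro!: bexI[where x="_ - x"])
  finally show ?thesis by simp
qed

lemma qpath_Suc_0: "finite U \<Longrightarrow> qpath w U (Suc 0) a b = (if a \<in> U then qstep w a b else 0)"
  by (simp add: qpath_Suc if_distrib if_distribR sum.delta' cong: if_cong)

lemma qpath_add:
  assumes "finite U" "b \<in> U"
  shows "qpath w U (m + n) a b = (\<Sum>y\<in>U. qpath w U m a y * qpath w U n y b)"
  using assms(2)
proof (induction n arbitrary: b)
  case 0
  then show ?case using assms(1) by (simp add: if_distrib if_distribR sum.delta cong: if_cong)
next
  case (Suc n)
  have "qpath w U (m + Suc n) a b = (\<Sum>z\<in>U. \<Sum>y\<in>U. qpath w U m a y * qpath w U n y z * qstep w z b)"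
    by (simp add: qpath_Suc Suc.IH sum_distrib_right)
  also have "\<dots> = (\<Sum>y\<in>U. qpath w U m a y * qpath w U (Suc n) y b)"
    by (subst sum.swap) (simp add: qpath_Suc sum_distrib_left mult.assoc)
  finally show ?case .
qed

lemma qpath_from_outside:
  assumes "a \<notin> V" "0 < n" "finite V"
  shows "qpath w V n a b = 0"
  using assms(2)
proof (induction n arbitrary: b)
  case (Suc n)
  then show ?case
    using assms(1,3) by (cases n) (simp_all add: qpath_Suc if_distrib if_distribR sum.delta' cong: if_cong)
qed simp

lemma qpath_first_visit:
  assumes "finite U" "x \<in> U"
  shows "qpath w U n a b = qpath w (U - {x}) n a b
           + (\<Sum>k<n. qpath w (U - {x}) k a x * qpath w U (n - k) x b)"
proof (induction n arbitrary: b)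
  case 0
  then show ?case by simp
next
  case (Suc n)
  let ?V = "U - {x}"
  have "(\<Sum>y\<in>U. (\<Sum>k<n. qpath w ?V k a x * qpath w U (n - k) x y) * qstep w y b)
      = (\<Sum>k<n. qpath w ?V k a x * (\<Sum>y\<in>U. qpath w U (n - k) x y * qstep w y b))"
    by (simp add: sum_distrib_right sum_distrib_left mult.assoc sum.swap[of _ U])
  also have "\<dots> = (\<Sum>k<n. qpath w ?V k a x * qpath w U (Suc n - k) x b)"
    by (intro sum.cong refl) (simp add: Suc_diff_le qpath_Suc)
  finally have visited: "(\<Sum>y\<in>U. (\<Sum>k<n. qpath w ?V k a x * qpath w U (n - k) x y) * qstep w y b)
      = (\<Sum>k<n. qpath w ?V k a x * qpath w U (Suc n - k) x b)" .
  have avoided: "(\<Sum>y\<in>U. qpath w ?V n a y * qstep w y b)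
      = qpath w ?V (Suc n) a b + qpath w ?V n a x * qstep w x b"
    using assms by (simp add: qpath_Suc sum.remove[of U x] add.commute)
  have "qpath w U (Suc n - n) x b = qstep w x b"
    using assms by (simp add: qpath_Suc_0)
  then show ?case
    by (simp add: qpath_Suc[of w U n] Suc distrib_right sum.distrib visited avoided)
qed

lemma qpath_first_visit_to:
  assumes "finite U" "x \<in> U"
  shows "qpath w U n a x = (\<Sum>k\<le>n. qpath w (U - {x}) k a x * qpath w U (n - k) x x)"
  using qpath_first_visit[OF assms, of w n a x] by (simp add: lessThan_Suc_atMost[symmetric] add.commute)

definition survival :: "'d::finite env \<Rightarrow> 'd site set \<Rightarrow> nat \<Rightarrow> 'd site \<Rightarrow> real" where
  "survival w U n a = (\<Sum>b\<in>U. qpath w U n a b)"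

lemma survival_nonneg: "stochastic_env w \<Longrightarrow> 0 \<le> survival w U n a"
  unfolding survival_def by (intro sum_nonneg qpath_nonneg)

lemma survival_0: "finite U \<Longrightarrow> survival w U 0 a = (if a \<in> U then 1 else 0)"
  unfolding survival_def by (simp add: sum.delta')

lemma survival_Suc_plus_exits_le:
  assumes "stochastic_env w" "finite U" "finite B" "B \<inter> U = {}"
  shows "survival w U (Suc n) a + (\<Sum>b\<in>B. qpath w U (Suc n) a b) \<le> survival w U n a"
proof -
  have "survival w U (Suc n) a + (\<Sum>b\<in>B. qpath w U (Suc n) a b) = (\<Sum>c\<in>U \<union> B. qpath w U (Suc n) a c)"
    unfolding survival_def using assms by (subst sum.union_disjoint) auto
  also have "\<dots> = (\<Sum>y\<in>U. qpath w U n a y * (\<Sum>c\<in>U \<union> B. qstep w y c))"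
    by (simp add: qpath_Suc sum_distrib_left sum.swap[of _ "U \<union> B"])
  also have "\<dots> \<le> (\<Sum>y\<in>U. qpath w U n a y * 1)"
    using assms by (intro sum_mono mult_left_mono sum_qstep_le_one qpath_nonneg) auto
  finally show ?thesis by (simp add: survival_def)
qed

lemma survival_antimono:
  assumes "stochastic_env w" "finite U" "n \<le> m"
  shows "survival w U m a \<le> survival w U n a"
  using assms(3)
proof (induction m rule: dec_induct)
  case (step m)
  then show ?case using survival_Suc_plus_exits_le[of w U "{}" m a] assms by simp
qed simp

lemma survival_le_one: "stochastic_env w \<Longrightarrow> finite U \<Longrightarrow> survival w U n a \<le> 1"
  using survival_antimono[of w U 0 n a] survival_0[of U w a] by (auto split: if_splits)

text \<open>The walk killed on entering \<open>x\<close> visits \<open>x\<close> at most once.\<close>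

lemma sum_qpath_to_outside_le_one:
  assumes "stochastic_env w" "finite V" "x \<notin> V"
  shows "(\<Sum>n<M. qpath w V n y x) \<le> 1"
proof -
  have arrivals: "(\<Sum>n<M. qpath w V (Suc n) y x) + survival w V M y \<le> survival w V 0 y" for M
  proof (induction M)
    case (Suc M)
    have "survival w V (Suc M) y + (\<Sum>b\<in>{x}. qpath w V (Suc M) y b) \<le> survival w V M y"
      using assms by (intro survival_Suc_plus_exits_le) auto
    then show ?case using Suc by simp
  qed simp
  show ?thesis
  proof (cases M)
    case (Suc M')
    have "(\<Sum>n<M. qpath w V n y x) = qpath w V 0 y x + (\<Sum>n<M'. qpath w V (Suc n) y x)"
      unfolding Suc by (rule sum.lessThan_Suc_shift)
    also have "\<dots> \<le> qpath w V 0 y x + survival w V 0 y"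
      using arrivals[of M'] survival_nonneg[OF assms(1), of V M' y] by simp
    also have "\<dots> \<le> 1" using assms by (simp add: survival_0)
    finally show ?thesis .
  qed simp
qed

definition elliptic_along :: "'d::finite env \<Rightarrow> 'd site \<Rightarrow> real \<Rightarrow> bool" where
  "elliptic_along w e \<kappa> \<longleftrightarrow> stochastic_env w \<and> e \<in> units \<and> 0 < \<kappa> \<and> (\<forall>z. \<kappa> \<le> w z e)"

lemma elliptic_along_le_one:
  assumes "elliptic_along w e \<kappa>"
  shows "\<kappa> \<le> 1"
proof -
  have "stochastic_env w" "e \<in> units" "\<kappa> \<le> w 0 e"
    using assms by (auto simp: elliptic_along_def)
  with stochastic_env_le_one show ?thesis by (meson order_trans)
qed

lemma qpath_line_ge:
  assumes "elliptic_along w e \<kappa>" "finite U" "\<forall>i<j. a + int i *s e \<in> U"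
  shows "\<kappa> ^ j \<le> qpath w U j a (a + int j *s e)"
  using assms(3)
proof (induction j)
  case (Suc j)
  let ?y = "a + int j *s e"
  have w: "stochastic_env w" "e \<in> units" "\<forall>z. \<kappa> \<le> w z e" "0 < \<kappa>"
    using assms(1) by (auto simp: elliptic_along_def)
  have "a + int (Suc j) *s e - ?y = e"
    by (simp add: vector_sadd_rdistrib algebra_simps)
  then have step: "qstep w ?y (a + int (Suc j) *s e) = w ?y e"
    using w by (simp add: qstep_def)
  have "\<kappa> ^ Suc j \<le> qpath w U j a ?y * qstep w ?y (a + int (Suc j) *s e)"
    unfolding step power_Suc2 using Suc w by (intro mult_mono qpath_nonneg) auto
  also have "\<dots> \<le> qpath w U (Suc j) a (a + int (Suc j) *s e)"
    unfolding qpath_Suc using Suc.prems w assms(2)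
    by (intro member_le_sum[where f="\<lambda>y. qpath w U j a y * qstep w y _"]
        mult_nonneg_nonneg qpath_nonneg qstep_nonneg) auto
  finally show ?case .
qed simp

lemma inj_line:
  assumes "e \<noteq> (0::'d::finite site)"
  shows "inj (\<lambda>i::nat. a + int i *s e)"
proof
  fix i j :: nat
  assume "a + int i *s e = a + int j *s e"
  moreover obtain k where "e $ k \<noteq> 0" using assms by (auto simp: vec_eq_iff)
  ultimately show "i = j" by (auto simp: vec_eq_iff)
qed

text \<open>Walking straight in direction \<open>e\<close> leaves \<open>U\<close> within \<open>card U\<close> steps.\<close>

lemma survival_card_le:
  assumes "elliptic_along w e \<kappa>" "finite U"
  shows "survival w U (card U) a \<le> 1 - \<kappa> ^ card U"
proof (cases "a \<in> U")
  case False
  then have "survival w U (card U) a = 0"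
    using assms(2) by (cases "card U") (simp_all add: survival_0 survival_def qpath_from_outside)
  then show ?thesis using elliptic_along_le_one[OF assms(1)] assms(1)
    by (simp add: elliptic_along_def power_le_one)
next
  case True
  let ?p = "\<lambda>i::nat. a + int i *s e"
  have w: "stochastic_env w" "e \<in> units" "0 < \<kappa>"
    using assms(1) by (auto simp: elliptic_along_def)
  have exits: "\<exists>i\<le>card U. ?p i \<notin> U"
  proof (rule ccontr)
    assume "\<not> ?thesis"
    then have "?p ` {..card U} \<subseteq> U" by auto
    then have "card (?p ` {..card U}) \<le> card U" by (rule card_mono[OF assms(2)])
    moreover have "e \<noteq> 0" using w(2) by auto
    then have "card (?p ` {..card U}) = Suc (card U)"
      by (subst card_image[OF inj_on_subset[OF inj_line subset_UNIV]]) simp_all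
    ultimately show False by simp
  qed
  define j where "j = (LEAST i. ?p i \<notin> U)"
  have pj: "?p j \<notin> U" unfolding j_def by (rule LeastI_ex) (use exits in blast)
  have j_le: "j \<le> card U" unfolding j_def using exits by (meson Least_le order_trans)
  have before: "\<forall>i<j. ?p i \<in> U" unfolding j_def using not_less_Least by blast
  obtain j' where j': "j = Suc j'" using pj True by (cases j) auto
  have "survival w U j a + qpath w U j a (?p j) \<le> survival w U j' a"
    using survival_Suc_plus_exits_le[of w U "{?p j}" j' a] w pj assms(2) j' by simp
  also have "\<dots> \<le> 1" using survival_le_one w assms(2) by blast
  finally have "survival w U j a \<le> 1 - \<kappa> ^ j"
    using qpath_line_ge[OF assms before] by linarith
  also have "\<dots> \<le> 1 - \<kappa> ^ card U"
    using elliptic_along_le_one[OF assms(1)] w j_le by (simp add: power_decreasing)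
  finally show ?thesis using survival_antimono[OF w(1) assms(2) j_le, of a] by linarith
qed

lemma survival_geometric:
  assumes "elliptic_along w e \<kappa>" "finite U"
  shows "survival w U (k * card U) a \<le> (1 - \<kappa> ^ card U) ^ k"
proof (induction k arbitrary: a)
  case 0
  then show ?case using survival_le_one[of w U 0 a] assms by (simp add: elliptic_along_def)
next
  case (Suc k)
  have w: "stochastic_env w" using assms(1) by (simp add: elliptic_along_def)
  have "survival w U (card U + k * card U) a
      = (\<Sum>b\<in>U. \<Sum>y\<in>U. qpath w U (card U) a y * qpath w U (k * card U) y b)"
    unfolding survival_def using assms(2) by (simp add: qpath_add)
  also have "\<dots> = (\<Sum>y\<in>U. qpath w U (card U) a y * survival w U (k * card U) y)"
    by (subst sum.swap) (simp add: survival_def sum_distrib_left)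
  also have "\<dots> \<le> (\<Sum>y\<in>U. qpath w U (card U) a y * (1 - \<kappa> ^ card U) ^ k)"
    using Suc w by (intro sum_mono mult_left_mono qpath_nonneg) auto
  also have "\<dots> = survival w U (card U) a * (1 - \<kappa> ^ card U) ^ k"
    by (simp add: survival_def sum_distrib_right)
  also have "\<dots> \<le> (1 - \<kappa> ^ card U) * (1 - \<kappa> ^ card U) ^ k"
    using survival_card_le[OF assms] elliptic_along_le_one[OF assms(1)] assms(1)
    by (intro mult_right_mono) (auto simp: elliptic_along_def power_le_one)
  finally show ?case by (simp add: add.commute)
qed

lemma sum_survival_le:
  assumes "elliptic_along w e \<kappa>" "finite U"
  shows "(\<Sum>n<M. survival w U n a) \<le> real (card U) / \<kappa> ^ card U"
proof (cases "U = {}")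
  case True
  then show ?thesis by (simp add: survival_def)
next
  case False
  let ?N = "card U" and ?t = "1 - \<kappa> ^ card U"
  have w: "stochastic_env w" using assms(1) by (simp add: elliptic_along_def)
  have N: "?N \<ge> 1" using assms(2) False by (simp add: Suc_leI card_gt_0_iff)
  have k: "0 < \<kappa>" using assms(1) by (simp add: elliptic_along_def)
  then have kN: "0 < \<kappa> ^ ?N" by simp
  have t: "0 \<le> ?t" using elliptic_along_le_one[OF assms(1)] assms(1)
    by (simp add: elliptic_along_def power_le_one)
  have "(\<Sum>n<M. survival w U n a) \<le> (\<Sum>n<M * ?N. survival w U n a)"
    using N w by (intro sum_mono2) (auto intro: survival_nonneg)
  also have "\<dots> = (\<Sum>k<M. \<Sum>n\<in>{k * ?N..<k * ?N + ?N}. survival w U n a)"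
    by (rule sum.nat_group[symmetric])
  also have "\<dots> \<le> (\<Sum>k<M. \<Sum>n\<in>{k * ?N..<k * ?N + ?N}. ?t ^ k)"
    using survival_antimono[OF w assms(2)] survival_geometric[OF assms]
    by (intro sum_mono) (meson atLeastLessThan_iff order_trans)
  also have "\<dots> = real ?N * (\<Sum>k<M. ?t ^ k)" by (simp add: sum_distrib_left)
  also have "\<dots> \<le> real ?N * (1 / \<kappa> ^ ?N)"
  proof (intro mult_left_mono)
    have "(\<Sum>k<M. ?t ^ k) = (1 - ?t ^ M) / \<kappa> ^ ?N"
      using sum_gp_strict[of ?t M] k by simp
    also have "\<dots> \<le> 1 / \<kappa> ^ ?N" using t kN by (intro divide_right_mono) auto
    finally show "(\<Sum>k<M. ?t ^ k) \<le> 1 / \<kappa> ^ ?N" .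
  qed auto
  finally show ?thesis by simp
qed

lemma qpath_summable:
  assumes "elliptic_along w e \<kappa>" "finite U" "b \<in> U"
  shows "summable (\<lambda>n. qpath w U n a b)"
    and "(\<Sum>n. qpath w U n a b) \<le> real (card U) / \<kappa> ^ card U"
proof -
  have w: "stochastic_env w" using assms(1) by (simp add: elliptic_along_def)
  have partial: "(\<Sum>n<M. qpath w U n a b) \<le> real (card U) / \<kappa> ^ card U" for M
  proof -
    have "(\<Sum>n<M. qpath w U n a b) \<le> (\<Sum>n<M. survival w U n a)"
      unfolding survival_def using assms w by (intro sum_mono member_le_sum qpath_nonneg) auto
    also have "\<dots> \<le> real (card U) / \<kappa> ^ card U" by (rule sum_survival_le[OF assms(1,2)])
    finally show ?thesis .
  qed
  show s: "summable (\<lambda>n. qpath w U n a b)"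
    using partial by (intro summableI_nonneg_bounded qpath_nonneg w)
  show "(\<Sum>n. qpath w U n a b) \<le> real (card U) / \<kappa> ^ card U"
    using partial by (intro suminf_le_const s)
qed

section \<open>Hitting and escape probabilities\<close>

definition hit_prob :: "'d::finite env \<Rightarrow> 'd site set \<Rightarrow> 'd site \<Rightarrow> 'd site \<Rightarrow> real" where
  "hit_prob w U x y = (\<Sum>k. qpath w (U - {x}) k y x)"

definition green_diag :: "'d::finite env \<Rightarrow> 'd site set \<Rightarrow> 'd site \<Rightarrow> real" where
  "green_diag w U x = (\<Sum>m. qpath w U m x x)"

definition escape_prob :: "'d::finite env \<Rightarrow> 'd site set \<Rightarrow> 'd site \<Rightarrow> real" where
  "escape_prob w U x = jump_mean x (\<lambda>e. 1 - hit_prob w U x (x + e)) w"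

lemma hit_prob_summable:
  assumes "stochastic_env w" "finite U"
  shows "summable (\<lambda>k. qpath w (U - {x}) k y x)"
  using assms sum_qpath_to_outside_le_one[of w "U - {x}" x]
  by (intro summableI_nonneg_bounded qpath_nonneg) auto

lemma hit_prob_nonneg: "stochastic_env w \<Longrightarrow> finite U \<Longrightarrow> 0 \<le> hit_prob w U x y"
  unfolding hit_prob_def by (intro suminf_nonneg hit_prob_summable qpath_nonneg)

lemma hit_prob_le_one: "stochastic_env w \<Longrightarrow> finite U \<Longrightarrow> hit_prob w U x y \<le> 1"
  unfolding hit_prob_def
  by (intro suminf_le_const hit_prob_summable sum_qpath_to_outside_le_one) auto

lemma hit_prob_outside:
  assumes "finite U" "y \<notin> U" "y \<noteq> x"
  shows "hit_prob w U x y = 0"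
proof -
  have "qpath w (U - {x}) k y x = 0" for k
    using assms qpath_from_outside[of y "U - {x}" k w x] by (cases k) auto
  then show ?thesis unfolding hit_prob_def by simp
qed

lemma suminf_qpath_eq_hit_prob_mult_green_diag:
  assumes "elliptic_along w e \<kappa>" "finite U" "x \<in> U"
  shows "(\<Sum>n. qpath w U n a x) = hit_prob w U x a * green_diag w U x"
proof -
  have w: "stochastic_env w" using assms(1) by (simp add: elliptic_along_def)
  have "summable (\<lambda>k. norm (qpath w (U - {x}) k a x))"
    using hit_prob_summable[OF w assms(2)] qpath_nonneg[OF w] by simp
  moreover have "summable (\<lambda>k. norm (qpath w U k x x))"
    using qpath_summable(1)[OF assms] qpath_nonneg[OF w] by simp
  ultimately have "(\<lambda>n. \<Sum>k\<le>n. qpath w (U - {x}) k a x * qpath w U (n - k) x x)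
      sums (hit_prob w U x a * green_diag w U x)"
    unfolding hit_prob_def green_diag_def by (rule Cauchy_product_sums)
  then have "(\<lambda>n. qpath w U n a x) sums (hit_prob w U x a * green_diag w U x)"
    unfolding qpath_first_visit_to[OF assms(2,3), symmetric] .
  then show ?thesis by (rule sums_unique[symmetric])
qed

lemma green_diag_renewal:
  assumes "elliptic_along w e \<kappa>" "finite U" "x \<in> U"
  shows "green_diag w U x * (1 - (\<Sum>y\<in>U. qstep w x y * hit_prob w U x y)) = 1"
proof -
  have w: "stochastic_env w" using assms(1) by (simp add: elliptic_along_def)
  let ?c = "\<lambda>k. \<Sum>y\<in>U. qstep w x y * qpath w (U - {x}) k y x"
  let ?r = "\<lambda>m. qpath w U m x x"
  have step: "?r (Suc m) = (\<Sum>k\<le>m. ?c k * ?r (m - k))" for m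
  proof -
    have "?r (Suc m) = (\<Sum>y\<in>U. qpath w U (Suc 0) x y * qpath w U m y x)"
      using qpath_add[OF assms(2,3), of w "Suc 0" m x] by simp
    also have "\<dots> = (\<Sum>y\<in>U. qstep w x y * (\<Sum>k\<le>m. qpath w (U - {x}) k y x * ?r (m - k)))"
    proof (intro sum.cong refl)
      fix y
      show "qpath w U (Suc 0) x y * qpath w U m y x
          = qstep w x y * (\<Sum>k\<le>m. qpath w (U - {x}) k y x * ?r (m - k))"
        using assms(2,3) by (simp add: qpath_Suc_0 qpath_first_visit_to[OF assms(2,3), of w m y])
    qed
    also have "\<dots> = (\<Sum>k\<le>m. ?c k * ?r (m - k))"
      by (simp add: sum_distrib_left sum_distrib_right mult.assoc sum.swap[of _ U])
    finally show ?thesis .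
  qed
  have c: "(\<lambda>k. ?c k) sums (\<Sum>y\<in>U. qstep w x y * hit_prob w U x y)"
    unfolding hit_prob_def
    by (intro sums_sum sums_mult summable_sums hit_prob_summable[OF w assms(2)])
  have "summable (\<lambda>k. norm (?c k))"
    using c w by (simp add: sums_iff sum_nonneg qstep_nonneg qpath_nonneg)
  moreover have "summable (\<lambda>k. norm (?r k))"
    using qpath_summable(1)[OF assms] qpath_nonneg[OF w] by simp
  ultimately have "(\<lambda>m. \<Sum>k\<le>m. ?c k * ?r (m - k)) sums ((\<Sum>k. ?c k) * green_diag w U x)"
    unfolding green_diag_def by (rule Cauchy_product_sums)
  then have "(\<lambda>m. ?r (Suc m)) sums ((\<Sum>k. ?c k) * green_diag w U x)"
    unfolding step .
  moreover have "(\<lambda>m. ?r (Suc m)) sums (green_diag w U x - 1)"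
    using qpath_summable(1)[OF assms] unfolding green_diag_def
    by (subst sums_Suc_iff) (simp add: summable_sums)
  ultimately have "(\<Sum>k. ?c k) * green_diag w U x = green_diag w U x - 1"
    by (rule sums_unique2)
  then show ?thesis using sums_unique[OF c] by (simp add: algebra_simps)
qed

lemma escape_prob_eq:
  assumes "stochastic_env w" "finite U"
  shows "escape_prob w U x = 1 - (\<Sum>y\<in>U. qstep w x y * hit_prob w U x y)"
proof -
  have "escape_prob w U x = (\<Sum>e\<in>units. w x e) - jump_mean x (\<lambda>e. hit_prob w U x (x + e)) w"
    unfolding escape_prob_def jump_mean_def by (simp add: left_diff_distrib sum_subtractf)
  also have "jump_mean x (\<lambda>e. hit_prob w U x (x + e)) w = (\<Sum>y\<in>U. qstep w x y * hit_prob w U x y)"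
    using assms(2) hit_prob_outside by (intro sum_qstep_eq_jump_mean[symmetric]) auto
  finally show ?thesis using stochastic_env_sum[OF assms(1)] by simp
qed

lemma
  assumes "elliptic_along w e \<kappa>" "finite U" "x \<in> U"
  shows green_diag_mult_escape_prob: "green_diag w U x * escape_prob w U x = 1"
    and escape_prob_pos: "0 < escape_prob w U x"
proof -
  have w: "stochastic_env w" using assms(1) by (simp add: elliptic_along_def)
  show *: "green_diag w U x * escape_prob w U x = 1"
    using green_diag_renewal[OF assms] escape_prob_eq[OF w assms(2)] by simp
  have "(\<Sum>m<1. qpath w U m x x) \<le> green_diag w U x"
    unfolding green_diag_def using qpath_summable(1)[OF assms] qpath_nonneg[OF w]
    by (intro sum_le_suminf) auto
  then have "0 < green_diag w U x" by simp
  with * show "0 < escape_prob w U x" by (metis zero_less_mult_pos zero_less_one)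
qed

lemma green_eq_hit_prob_div_escape_prob:
  assumes "elliptic_along w e \<kappa>" "finite U" "x \<in> U"
  shows "green w U x = hit_prob w U x 0 / escape_prob w U x"
  using suminf_qpath_eq_hit_prob_mult_green_diag[OF assms, of 0] green_diag_mult_escape_prob[OF assms]
    escape_prob_pos[OF assms]
  unfolding green_def by (simp add: field_simps)

lemma
  assumes "elliptic_along w e \<kappa>" "finite U" "x \<in> U"
  shows green_nonneg: "0 \<le> green w U x"
    and green_le: "green w U x \<le> real (card U) / \<kappa> ^ card U"
proof -
  have w: "stochastic_env w" using assms(1) by (simp add: elliptic_along_def)
  show "0 \<le> green w U x"
    unfolding green_def by (intro suminf_nonneg qpath_summable(1)[OF assms] qpath_nonneg w)
  show "green w U x \<le> real (card U) / \<kappa> ^ card U"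
    unfolding green_def by (rule qpath_summable(2)[OF assms])
qed

lemma hit_prob_le_green_bound_mult_escape_prob:
  assumes "elliptic_along w e \<kappa>" "finite U" "x \<in> U"
  shows "hit_prob w U x 0 \<le> real (card U) / \<kappa> ^ card U * escape_prob w U x"
proof -
  have "hit_prob w U x 0 = green w U x * escape_prob w U x"
    using green_eq_hit_prob_div_escape_prob[OF assms] escape_prob_pos[OF assms] by simp
  also have "\<dots> \<le> real (card U) / \<kappa> ^ card U * escape_prob w U x"
    using green_le[OF assms] escape_prob_pos[OF assms] by (intro mult_right_mono) auto
  finally show ?thesis .
qed

lemma green_pos:
  assumes "elliptic_along w e \<kappa>" "\<forall>z. \<forall>e\<in>units. 0 < w z e"
    and "finite U" "nn_connected U" "0 \<in> U" "x \<in> U"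
  shows "0 < green w U x"
proof -
  have w: "stochastic_env w" using assms(1) by (simp add: elliptic_along_def)
  have "\<exists>n. 0 < qpath w U n 0 b" if "(\<lambda>y z. y \<in> U \<and> z \<in> U \<and> z - y \<in> units)\<^sup>*\<^sup>* 0 b" for b
    using that
  proof (induction rule: rtranclp_induct)
    case base
    show ?case by (rule exI[of _ 0]) simp
  next
    case (step b c)
    then obtain n where n: "0 < qpath w U n 0 b" by blast
    have "0 < qpath w U n 0 b * qstep w b c"
      using n step(2) assms(2) by (simp add: qstep_def)
    also have "\<dots> \<le> qpath w U (Suc n) 0 c"
      unfolding qpath_Suc using step(2) assms(3) w
      by (intro member_le_sum[where f="\<lambda>y. qpath w U n 0 y * qstep w y c"]
          mult_nonneg_nonneg qpath_nonneg qstep_nonneg) auto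
    finally show ?case by blast
  qed
  then obtain n where n: "0 < qpath w U n 0 x"
    using assms(4-6) unfolding nn_connected_def by blast
  also have "\<dots> \<le> green w U x"
    unfolding green_def using sum_le_suminf[OF qpath_summable(1)[OF assms(1,3,6)], of "{n}"]
    by (simp add: qpath_nonneg[OF w])
  finally show ?thesis .
qed

section \<open>Measurability and stationarity\<close>

lemma measurable_coord_coord:
  assumes "i \<in> I" "j \<in> J"
  shows "(\<lambda>w. w i j) \<in> borel_measurable (\<Pi>\<^sub>M i\<in>I. \<Pi>\<^sub>M j\<in>J. (borel :: real measure))"
  using measurable_compose[OF measurable_component_singleton[OF assms(1)]
      measurable_component_singleton[OF assms(2)]] .

lemma measurable_env_coord: "(\<lambda>w. w z e) \<in> borel_measurable (Omega_M :: 'd::finite env measure)"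
  unfolding Omega_M_def by (rule measurable_coord_coord) auto

lemma space_Omega_M: "space (Omega_M :: 'd::finite env measure) = UNIV"
  unfolding Omega_M_def by (simp add: space_PiM PiE_def extensional_def)

lemma measurable_shift: "shift y \<in> measurable (Omega_M :: 'd::finite env measure) Omega_M"
  unfolding shift_def Omega_M_def
  by (rule measurable_PiM_single') (auto intro: measurable_component_singleton simp: space_PiM)

lemma measurable_restrict_Omega_M:
  "(\<lambda>w. restrict w L) \<in> measurable (Omega_M :: 'd::finite env measure) (\<Pi>\<^sub>M z\<in>L. \<Pi>\<^sub>M e\<in>UNIV. borel)"
  unfolding Omega_M_def by (rule measurable_restrict_subset) simp

lemma measurable_restrict_Fsig:
  "(\<lambda>w. restrict w L) \<in> measurable (Fsig L :: 'd::finite env measure) (\<Pi>\<^sub>M z\<in>L. \<Pi>\<^sub>M e\<in>UNIV. borel)"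
  unfolding Fsig_def using measurable_space[OF measurable_restrict_Omega_M]
  by (intro measurable_vimage_algebra1) auto

lemma space_Fsig: "space (Fsig L) = space Omega_M"
  unfolding Fsig_def by simp

lemma sets_Fsig_subset: "sets (Fsig L) \<subseteq> sets (Omega_M :: 'd::finite env measure)"
  unfolding Fsig_def by (rule sets_image_in_sets[OF refl measurable_restrict_Omega_M])

lemma sets_Fsig_mono:
  assumes "L' \<subseteq> L"
  shows "sets (Fsig L') \<subseteq> sets (Fsig L :: 'd::finite env measure)"
proof -
  have "restrict (restrict w L) L' = restrict w L'" for w :: "'d env"
    using assms by (auto simp: restrict_def fun_eq_iff)
  then have "(\<lambda>w. restrict w L') \<in> measurable (Fsig L) (\<Pi>\<^sub>M z\<in>L'. \<Pi>\<^sub>M e\<in>(UNIV::'d site set). borel)"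
    using measurable_comp[OF measurable_restrict_Fsig measurable_restrict_subset[OF assms]]
    by (simp add: o_def)
  then show ?thesis unfolding Fsig_def[of L'] by (intro sets_image_in_sets) (auto simp: space_Fsig)
qed

lemma measurable_Fsig_coord:
  assumes "z \<in> L"
  shows "(\<lambda>w. w z e) \<in> borel_measurable (Fsig L :: 'd::finite env measure)"
  using measurable_comp[OF measurable_restrict_Fsig measurable_coord_coord[OF assms UNIV_I]] assms
  by (simp add: o_def)

lemma measurable_qpath:
  assumes "\<And>z e. z \<in> V \<Longrightarrow> (\<lambda>w. w z e) \<in> borel_measurable M"
  shows "(\<lambda>w. qpath w V n a b) \<in> borel_measurable M"
proof (induction n arbitrary: b)
  case (Suc n)
  have "(\<lambda>w. qstep w y b) \<in> borel_measurable M" if "y \<in> V" for y b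
    unfolding qstep_def using assms that by auto
  then show ?case unfolding qpath_Suc using Suc by (intro borel_measurable_sum borel_measurable_times) auto
qed simp

lemma AE_all_sites_of_stationary:
  fixes P :: "'d::finite env measure"
  assumes sets_P: "sets P = sets Omega_M" and "stationary P"
    and Q: "{w \<in> space Omega_M. Q (w 0)} \<in> sets Omega_M" and "AE w in P. Q (w 0)"
  shows "AE w in P. \<forall>z. Q (w z)"
proof -
  have "AE w in P. Q (w z)" for z
  proof -
    have shift: "shift z \<in> measurable P Omega_M"
      using measurable_shift measurable_cong_sets[OF sets_P refl] by blast
    have "distr P Omega_M (shift z) = P"
      using assms(2) by (simp add: stationary_def)
    then have "AE w in distr P Omega_M (shift z). Q (w 0)" using assms(4) by (simp only:)
    then show ?thesis by (simp add: AE_distr_iff[OF shift Q] shift_def)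
  qed
  then show ?thesis by (simp add: AE_all_countable)
qed

context sigma_finite_subalgebra
begin

lemma real_cond_exp_nonneg_of_integrals_nonneg:
  assumes Z: "integrable M Z"
    and int: "\<And>B. B \<in> sets F \<Longrightarrow> 0 \<le> (\<integral>w. indicator B w * Z w \<partial>M)"
  shows "AE w in M. 0 \<le> real_cond_exp M F Z w"
proof -
  let ?E = "real_cond_exp M F Z"
  define B where "B = {w \<in> space M. ?E w < 0}"
  have "B = {w \<in> space F. ?E w < 0}"
    using subalg by (simp add: B_def subalgebra_def)
  then have B: "B \<in> sets F" by simp
  have "integrable M (\<lambda>w. indicator B w * Z w)"
    using B subalg Z integrable_real_mult_indicator[of B M Z]
    by (auto simp: subalgebra_def mult.commute)
  then have i: "integrable M (\<lambda>w. indicator B w * ?E w)"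
    and e: "(\<integral>w. indicator B w * ?E w \<partial>M) = (\<integral>w. indicator B w * Z w \<partial>M)"
    using real_cond_exp_intg[of "indicator B" Z] B Z by (auto simp: borel_measurable_integrable)
  have "0 \<le> (\<integral>w. - (indicator B w * ?E w) \<partial>M)"
    by (rule integral_nonneg_AE) (auto simp: B_def indicator_def)
  with e int[OF B] have "(\<integral>w. - (indicator B w * ?E w) \<partial>M) = 0" by simp
  then have "AE w in M. - (indicator B w * ?E w) = 0"
    using integral_nonneg_eq_0_iff_AE[of M "\<lambda>w. - (indicator B w * ?E w)"] i
    by (auto simp: B_def indicator_def)
  from this AE_space show ?thesis
    by eventually_elim (auto simp: B_def indicator_def split: if_splits)
qed

end

section \<open>Rounding up to the grid \<open>{1/n, 2/n, \<dots>, 1}\<close>\<close>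

definition grid_ceil :: "nat \<Rightarrow> real \<Rightarrow> real" where
  "grid_ceil n t = of_int (max 1 (min (int n) \<lceil>real n * t\<rceil>)) / real n"

lemma measurable_grid_ceil [measurable]: "grid_ceil n \<in> borel_measurable borel"
  unfolding grid_ceil_def by measurable

lemma grid_ceil_bounds:
  assumes "1 \<le> n" "0 \<le> t" "t \<le> 1"
  shows "t \<le> grid_ceil n t" "grid_ceil n t \<le> t + 1 / real n"
proof -
  have n: "0 < real n" using assms(1) by simp
  have "\<lceil>real n * t\<rceil> \<le> int n"
    using assms(3) n by (simp add: ceiling_le_iff mult_left_le)
  then have k: "of_int (max 1 (min (int n) \<lceil>real n * t\<rceil>)) = max 1 (of_int \<lceil>real n * t\<rceil> :: real)"
    by (simp add: min_absorb2 of_int_max)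
  have "real n * t \<le> max 1 (of_int \<lceil>real n * t\<rceil>)" by linarith
  then show "t \<le> grid_ceil n t"
    unfolding grid_ceil_def k using n by (simp add: le_divide_eq mult.commute)
  have "max 1 (of_int \<lceil>real n * t\<rceil>) \<le> real n * t + 1"
    using assms(2) n by (auto intro: max.boundedI)
  then have "max 1 (of_int \<lceil>real n * t\<rceil>) / real n \<le> (real n * t + 1) / real n"
    using n by (intro divide_right_mono) auto
  also have "\<dots> = t + 1 / real n" using n by (simp add: field_simps)
  finally show "grid_ceil n t \<le> t + 1 / real n" unfolding grid_ceil_def k .
qed

lemma grid_ceil_in_grid:
  assumes "1 \<le> n"
  shows "grid_ceil n t \<in> (\<lambda>k. real k / real n) ` {1..n}"
proof -
  let ?k = "max 1 (min (int n) \<lceil>real n * t\<rceil>)"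
  have "grid_ceil n t = real (nat ?k) / real n" "nat ?k \<in> {1..n}"
    using assms unfolding grid_ceil_def by auto
  then show ?thesis by blast
qed

lemma tendsto_grid_ceil:
  assumes "0 \<le> t" "t \<le> 1"
  shows "(\<lambda>k. grid_ceil (Suc k) t) \<longlonglongrightarrow> t"
proof (rule real_tendsto_sandwich)
  show "\<forall>\<^sub>F k in sequentially. t \<le> grid_ceil (Suc k) t"
    using grid_ceil_bounds(1)[OF _ assms] by simp
  show "\<forall>\<^sub>F k in sequentially. grid_ceil (Suc k) t \<le> t + inverse (real (Suc k))"
  proof (intro always_eventually allI)
    fix k
    show "grid_ceil (Suc k) t \<le> t + inverse (real (Suc k))"
      using grid_ceil_bounds(2)[OF _ assms, of "Suc k"] by (simp add: divide_inverse)
  qed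
  show "(\<lambda>k. t + inverse (real (Suc k))) \<longlonglongrightarrow> t"
    using tendsto_add[OF tendsto_const LIMSEQ_inverse_real_of_nat, of t] by simp
qed simp

definition grid_approx :: "nat \<Rightarrow> ('d::finite site \<Rightarrow> real) \<Rightarrow> 'd site \<Rightarrow> real" where
  "grid_approx n g = restrict (\<lambda>e. grid_ceil n (g e)) units"

definition grid_funs :: "nat \<Rightarrow> ('d::finite site \<Rightarrow> real) set" where
  "grid_funs n = PiE units (\<lambda>_. (\<lambda>k. real k / real n) ` {1..n})"

lemma finite_grid_funs: "finite (grid_funs n)"
  unfolding grid_funs_def by (intro finite_PiE) auto

lemma grid_approx_in_grid_funs: "1 \<le> n \<Longrightarrow> grid_approx n g \<in> grid_funs n"
  unfolding grid_approx_def grid_funs_def using grid_ceil_in_grid by auto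

lemma grid_funs_range:
  assumes "p \<in> grid_funs n" "e \<in> units"
  shows "0 < p e" "p e \<le> 1"
  using assms unfolding grid_funs_def by (auto simp: PiE_iff)

lemma grid_approx_ge:
  assumes "1 \<le> n" "e \<in> units" "0 \<le> g e" "g e \<le> 1"
  shows "g e \<le> grid_approx n g e"
  using assms grid_ceil_bounds(1) by (simp add: grid_approx_def)

lemma tendsto_jump_mean_grid_approx:
  assumes "\<forall>e\<in>units. 0 \<le> g e \<and> g e \<le> 1"
  shows "(\<lambda>k. jump_mean x (grid_approx (Suc k) g) w) \<longlonglongrightarrow> jump_mean x g w"
  unfolding jump_mean_def grid_approx_def using assms
  by (intro tendsto_sum tendsto_mult_right) (simp add: tendsto_grid_ceil)

lemma sets_grid_approx_level:
  assumes f_meas: "\<And>e. (\<lambda>w. f w e) \<in> borel_measurable (Fsig L)" and p: "p \<in> grid_funs n"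
  shows "{w. grid_approx n (f w) = p} \<in> sets (Fsig L)"
proof -
  have "{w. grid_approx n (f w) = p} = {w \<in> space (Fsig L). \<forall>e\<in>units. grid_ceil n (f w e) = p e}"
    using p unfolding grid_approx_def grid_funs_def space_Fsig space_Omega_M
    by (auto simp: PiE_iff extensional_def fun_eq_iff)
  also have "\<dots> \<in> sets (Fsig L)"
  proof (intro sets.sets_Collect_finite_All finite_units)
    fix e
    have "(\<lambda>w. grid_ceil n (f w e)) \<in> borel_measurable (Fsig L)"
      using f_meas by measurable
    from borel_measurable_vimage[OF this, of "p e"]
    show "{w \<in> space (Fsig L). grid_ceil n (f w e) = p e} \<in> sets (Fsig L)"
      by (simp add: vimage_def Int_def conj_commute)
  qed
  finally show ?thesis .
qed

section \<open>From the tilted drift condition to Kalikow's condition\<close>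

locale tilted_drift_condition =
  fixes P :: "'d::finite env measure" and l :: "'d site" and \<delta> \<kappa> :: real and e\<^sub>0 :: "'d site"
  assumes prob_space_P: "prob_space P"
    and sets_P: "sets P = sets Omega_M"
    and AE_elliptic: "AE w in P. elliptic_along w e\<^sub>0 \<kappa>"
    and AE_positive: "AE w in P. \<forall>z. \<forall>e\<in>units. 0 < w z e"
    and tilted_drift: "\<And>x f. \<forall>e\<in>units. 0 < f e \<and> f e \<le> 1 \<Longrightarrow>
       AE w in P. \<delta> \<le> inverse (real_cond_exp P (Fsig (- {x})) (\<lambda>w'. 1 / jump_mean x f w') w)
                      * real_cond_exp P (Fsig (- {x})) (\<lambda>w'. drift_dot l x w' / jump_mean x f w') w"
begin

interpretation prob_space P by (rule prob_space_P)

lemma AE_stochastic: "AE w in P. stochastic_env w"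
  using AE_elliptic by eventually_elim (simp add: elliptic_along_def)

lemma measurable_P_iff: "borel_measurable P = borel_measurable Omega_M"
  by (rule measurable_cong_sets[OF sets_P refl])

lemma subalgebra_Fsig: "subalgebra P (Fsig L)"
  using sets_Fsig_subset[of L] sets_P space_Fsig[of L] sets_eq_imp_space_eq[OF sets_P]
  by (auto simp: subalgebra_def)

lemma sigma_finite_subalgebra_Fsig: "sigma_finite_subalgebra P (Fsig L)"
proof -
  interpret finite_measure_subalgebra P "Fsig L"
    by unfold_locales (rule subalgebra_Fsig)
  show ?thesis by unfold_locales
qed

lemma sets_P_of_Fsig: "C \<in> sets (Fsig L) \<Longrightarrow> C \<in> sets P"
  using subalgebra_Fsig by (auto simp: subalgebra_def)

lemma measurable_P_of_Fsig: "f \<in> borel_measurable (Fsig L) \<Longrightarrow> f \<in> borel_measurable P"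
  by (rule measurable_from_subalg[OF subalgebra_Fsig])

lemma measurable_P_coord [measurable]: "(\<lambda>w. w z e) \<in> borel_measurable P"
  unfolding measurable_P_iff by (rule measurable_env_coord)

lemma measurable_P_qpath [measurable]: "(\<lambda>w. qpath w V n a b) \<in> borel_measurable P"
  by (rule measurable_qpath) simp

lemma measurable_green [measurable]: "(\<lambda>w. green w U x) \<in> borel_measurable P"
  unfolding green_def by measurable

lemma measurable_hit_prob_Fsig: "(\<lambda>w. hit_prob w U x y) \<in> borel_measurable (Fsig (- {x}))"
  unfolding hit_prob_def
  by (intro borel_measurable_suminf measurable_qpath measurable_Fsig_coord) auto

lemma measurable_drift_dot [measurable]: "(\<lambda>w. drift_dot l x w) \<in> borel_measurable P"
  unfolding drift_dot_def by measurable

lemma measurable_jump_mean: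
  assumes "\<And>e. (\<lambda>w. f w e) \<in> borel_measurable P"
  shows "(\<lambda>w. jump_mean x (f w) w) \<in> borel_measurable P"
  unfolding jump_mean_def using assms by (intro borel_measurable_sum borel_measurable_times measurable_P_coord)

lemma AE_jump_mean_bounds:
  assumes "\<forall>e\<in>units. 0 < q e \<and> q e \<le> 1"
  shows "AE w in P. Min (q ` units) \<le> jump_mean x q w \<and> jump_mean x q w \<le> 1"
  using AE_stochastic
proof eventually_elim
  case (elim w)
  show ?case using jump_mean_bounds[OF elim, where f=q and a="Min (q ` units)" and b=1 and x=x] assms
    by auto
qed

lemma AE_abs_drift_excess_le: "AE w in P. \<bar>drift_dot l x w - c\<bar> \<le> drift_norm l + \<bar>c\<bar>"
  using AE_stochastic by eventually_elim (rule abs_drift_excess_le)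

lemma integrable_div_jump_mean:
  assumes q: "\<forall>e\<in>units. 0 < q e \<and> q e \<le> 1"
    and \<phi>: "\<phi> \<in> borel_measurable P" "AE w in P. \<bar>\<phi> w\<bar> \<le> c"
  shows "integrable P (\<lambda>w. \<phi> w / jump_mean x q w)"
proof (rule integrable_const_bound[where B="c / Min (q ` units)"])
  have m: "0 < Min (q ` units)" using q by (simp add: Min_image_units_pos)
  show "AE w in P. norm (\<phi> w / jump_mean x q w) \<le> c / Min (q ` units)"
    using AE_jump_mean_bounds[OF q, of x] \<phi>(2)
  proof eventually_elim
    case (elim w)
    then have "\<bar>\<phi> w\<bar> / jump_mean x q w \<le> c / Min (q ` units)"
      using m by (intro frac_le) auto
    then show ?case using elim m by (simp add: abs_divide)
  qed
  show "(\<lambda>w. \<phi> w / jump_mean x q w) \<in> borel_measurable P"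
    using \<phi>(1) measurable_jump_mean[of "\<lambda>_. q"] by measurable
qed

lemma cond_exp_tilted_excess_nonneg:
  assumes q: "\<forall>e\<in>units. 0 < q e \<and> q e \<le> 1"
  shows "AE w in P. 0 \<le> real_cond_exp P (Fsig (- {x})) (\<lambda>w. (drift_dot l x w - \<delta>) / jump_mean x q w) w"
proof -
  interpret sigma_finite_subalgebra P "Fsig (- {x})" by (rule sigma_finite_subalgebra_Fsig)
  let ?E = "real_cond_exp P (Fsig (- {x}))" and ?S = "jump_mean x q"
  have int_inv: "integrable P (\<lambda>w. 1 / ?S w)"
    using integrable_div_jump_mean[OF q, of "\<lambda>_. 1" 1] by simp
  have int_drift: "integrable P (\<lambda>w. drift_dot l x w / ?S w)"
    using AE_abs_drift_excess_le[of x 0] by (intro integrable_div_jump_mean[OF q]) simp_all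
  \<comment> \<open>Since \<open>?S \<le> 1\<close>, the factor \<open>inverse (?E (1 / ?S))\<close> in the hypothesis can be cleared.\<close>
  have "AE w in P. 1 \<le> ?E (\<lambda>w. 1 / ?S w) w"
  proof (rule real_cond_exp_ge_c[OF int_inv])
    have m: "0 < Min (q ` units)" using q by (simp add: Min_image_units_pos)
    show "AE w in P. 1 \<le> 1 / ?S w"
      using AE_jump_mean_bounds[OF q, of x]
    proof eventually_elim
      case (elim w)
      then have "0 < ?S w" using m by linarith
      then show ?case using elim by (simp add: le_divide_eq_1)
    qed
  qed
  moreover have "AE w in P. ?E (\<lambda>w. (drift_dot l x w - \<delta>) / ?S w) w
      = ?E (\<lambda>w. drift_dot l x w / ?S w) w - \<delta> * ?E (\<lambda>w. 1 / ?S w) w"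
  proof -
    have eq: "(\<lambda>w. (drift_dot l x w - \<delta>) / ?S w) = (\<lambda>w. drift_dot l x w / ?S w - \<delta> * (1 / ?S w))"
      by (simp add: diff_divide_distrib)
    have "AE w in P. ?E (\<lambda>w. drift_dot l x w / ?S w - \<delta> * (1 / ?S w)) w
        = ?E (\<lambda>w. drift_dot l x w / ?S w) w - ?E (\<lambda>w. \<delta> * (1 / ?S w)) w"
      by (rule real_cond_exp_diff[OF int_drift integrable_mult_right[OF int_inv]])
    moreover have "AE w in P. ?E (\<lambda>w. \<delta> * (1 / ?S w)) w = \<delta> * ?E (\<lambda>w. 1 / ?S w) w"
      by (rule real_cond_exp_cmult[OF int_inv])
    ultimately show ?thesis unfolding eq by eventually_elim linarith
  qed
  moreover note tilted_drift[OF q, of x]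
  ultimately show ?thesis
  proof eventually_elim
    case (elim w)
    let ?a = "?E (\<lambda>w. 1 / ?S w) w" and ?b = "?E (\<lambda>w. drift_dot l x w / ?S w) w"
    have "\<delta> * ?a \<le> inverse ?a * ?b * ?a" using elim by (intro mult_right_mono) auto
    also have "\<dots> = ?b" using elim by (simp add: field_simps)
    finally show ?case using elim by simp
  qed
qed

lemma integral_tilted_excess_nonneg:
  assumes q: "\<forall>e\<in>units. 0 < q e \<and> q e \<le> 1"
    and h: "h \<in> borel_measurable (Fsig (- {x}))" "AE w in P. 0 \<le> h w \<and> h w \<le> B"
  shows "integrable P (\<lambda>w. h w * ((drift_dot l x w - \<delta>) / jump_mean x q w))"
    and "0 \<le> (\<integral>w. h w * ((drift_dot l x w - \<delta>) / jump_mean x q w) \<partial>P)"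
proof -
  interpret sigma_finite_subalgebra P "Fsig (- {x})" by (rule sigma_finite_subalgebra_Fsig)
  let ?g = "\<lambda>w. (drift_dot l x w - \<delta>) / jump_mean x q w"
  have int_g: "integrable P ?g"
    using AE_abs_drift_excess_le by (intro integrable_div_jump_mean[OF q]) simp_all
  have [measurable]: "h \<in> borel_measurable P" by (rule measurable_P_of_Fsig[OF h(1)])
  show int: "integrable P (\<lambda>w. h w * ?g w)"
  proof (rule Bochner_Integration.integrable_bound[OF integrable_mult_right[OF int_g, of B]])
    show "AE w in P. norm (h w * ?g w) \<le> norm (B * ?g w)"
      using h(2)
    proof eventually_elim
      case (elim w)
      have "h w * \<bar>?g w\<bar> \<le> B * \<bar>?g w\<bar>" using elim by (intro mult_right_mono) auto
      moreover have "0 \<le> B" using elim by linarith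
      ultimately show ?case using elim by (simp add: abs_mult)
    qed
    show "(\<lambda>w. h w * ?g w) \<in> borel_measurable P"
      using borel_measurable_integrable[OF int_g] by measurable
  qed
  have "(\<integral>w. h w * real_cond_exp P (Fsig (- {x})) ?g w \<partial>P) = (\<integral>w. h w * ?g w \<partial>P)"
    by (rule real_cond_exp_intg(2)[OF int h(1) borel_measurable_integrable[OF int_g]])
  moreover have "0 \<le> (\<integral>w. h w * real_cond_exp P (Fsig (- {x})) ?g w \<partial>P)"
    using h(2) cond_exp_tilted_excess_nonneg[OF q, of x]
    by (intro integral_nonneg_AE) (auto elim: eventually_elim2)
  ultimately show "0 \<le> (\<integral>w. h w * ?g w \<partial>P)" by simp
qed

lemma integral_finite_tilt_nonneg:
  assumes Q: "finite Q" "\<And>w. q w \<in> Q" "\<And>p. p \<in> Q \<Longrightarrow> \<forall>e\<in>units. 0 < p e \<and> p e \<le> 1"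
    and level_sets: "\<And>p. p \<in> Q \<Longrightarrow> {w. q w = p} \<in> sets (Fsig (- {x}))"
    and h: "h \<in> borel_measurable (Fsig (- {x}))" "AE w in P. 0 \<le> h w \<and> h w \<le> B"
  shows "0 \<le> (\<integral>w. h w * ((drift_dot l x w - \<delta>) / jump_mean x (q w) w) \<partial>P)"
proof -
  let ?h = "\<lambda>p w. h w * indicator {w. q w = p} w"
  let ?Z = "\<lambda>p w. ?h p w * ((drift_dot l x w - \<delta>) / jump_mean x p w)"
  have h_level: "?h p \<in> borel_measurable (Fsig (- {x}))" "AE w in P. 0 \<le> ?h p w \<and> ?h p w \<le> B"
    if "p \<in> Q" for p
  proof -
    show "?h p \<in> borel_measurable (Fsig (- {x}))"
      using h(1) level_sets[OF that] by (intro borel_measurable_times borel_measurable_indicator)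
    show "AE w in P. 0 \<le> ?h p w \<and> ?h p w \<le> B"
      using h(2) by eventually_elim (auto simp: indicator_def)
  qed
  have "(\<Sum>p\<in>Q. ?Z p w) = h w * ((drift_dot l x w - \<delta>) / jump_mean x (q w) w)" for w
  proof -
    have "(\<Sum>p\<in>Q. ?Z p w)
        = (\<Sum>p\<in>Q. if p = q w then h w * ((drift_dot l x w - \<delta>) / jump_mean x p w) else 0)"
      by (intro sum.cong) (auto simp: indicator_def)
    then show ?thesis using Q(1,2) by (simp add: sum.delta)
  qed
  then have "(\<integral>w. h w * ((drift_dot l x w - \<delta>) / jump_mean x (q w) w) \<partial>P) = (\<Sum>p\<in>Q. \<integral>w. ?Z p w \<partial>P)"
    using integral_tilted_excess_nonneg(1)[OF Q(3) h_level]
    by (simp add: Bochner_Integration.integral_sum[symmetric])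
  also have "0 \<le> \<dots>"
    using integral_tilted_excess_nonneg(2)[OF Q(3) h_level] by (intro sum_nonneg)
  finally show ?thesis .
qed

lemma measurable_jump_mean_grid_approx:
  assumes "\<And>e. (\<lambda>w. f w e) \<in> borel_measurable P"
  shows "(\<lambda>w. jump_mean x (grid_approx n (f w)) w) \<in> borel_measurable P"
proof (rule measurable_jump_mean)
  fix e
  show "(\<lambda>w. grid_approx n (f w) e) \<in> borel_measurable P"
    unfolding grid_approx_def
    by (cases "e \<in> units") (auto intro: measurable_compose[OF assms measurable_grid_ceil])
qed

lemma integral_grid_tilt_nonneg:
  assumes f_meas: "\<And>e. (\<lambda>w. f w e) \<in> borel_measurable (Fsig (- {x}))"
    and h: "h \<in> borel_measurable (Fsig (- {x}))" "AE w in P. 0 \<le> h w \<and> h w \<le> B"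
  shows "0 \<le> (\<integral>w. h w * ((drift_dot l x w - \<delta>) / jump_mean x (grid_approx (Suc k) (f w)) w) \<partial>P)"
  by (rule integral_finite_tilt_nonneg[where Q="grid_funs (Suc k)", OF _ _ _ _ h])
     (use finite_grid_funs grid_approx_in_grid_funs[of "Suc k"] grid_funs_range
        sets_grid_approx_level[where f=f, OF f_meas] in auto)

text \<open>The hypothesis only speaks about deterministic weights in (0, 1]. Random
  F(-{x})-measurable weights with values in [0, 1] are approached from above by their grid
  roundings, which take finitely many values; the bound on h provides domination.\<close>

lemma integral_random_tilt_nonneg:
  assumes f_meas: "\<And>e. (\<lambda>w. f w e) \<in> borel_measurable (Fsig (- {x}))"
    and f_AE: "AE w in P. (\<forall>e\<in>units. 0 \<le> f w e \<and> f w e \<le> 1) \<and> 0 < jump_mean x (f w) w"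
    and h: "h \<in> borel_measurable (Fsig (- {x}))"
      "AE w in P. 0 \<le> h w \<and> h w \<le> B * jump_mean x (f w) w"
  shows "0 \<le> (\<integral>w. h w * ((drift_dot l x w - \<delta>) / jump_mean x (f w) w) \<partial>P)"
proof -
  let ?S = "\<lambda>k w. jump_mean x (grid_approx (Suc k) (f w)) w"
  let ?s = "\<lambda>k w. h w * ((drift_dot l x w - \<delta>) / ?S k w)"
  let ?c = "drift_norm l + \<bar>\<delta>\<bar>"
  have AE_all: "AE w in P. stochastic_env w \<and> (\<forall>e\<in>units. 0 \<le> f w e \<and> f w e \<le> 1)
      \<and> 0 < jump_mean x (f w) w \<and> 0 \<le> h w \<and> h w \<le> B * jump_mean x (f w) w"
    using AE_stochastic f_AE h(2) by eventually_elim auto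
  have f_P: "(\<lambda>w. f w e) \<in> borel_measurable P" for e
    by (rule measurable_P_of_Fsig[OF f_meas])
  note [measurable] = measurable_P_of_Fsig[OF h(1)] measurable_jump_mean[OF f_P]
    measurable_jump_mean_grid_approx[OF f_P]
  have "AE w in P. 0 \<le> h w \<and> h w \<le> B"
    using AE_all
  proof eventually_elim
    case (elim w)
    then have "0 \<le> B * jump_mean x (f w) w" by linarith
    then have "0 \<le> B" using elim by (simp add: zero_le_mult_iff)
    moreover have "jump_mean x (f w) w \<le> 1"
      using elim by (intro jump_mean_bounds(2)[where a=0]) auto
    ultimately show ?case using elim by (meson mult_left_le order_trans)
  qed
  then have "0 \<le> (\<integral>w. ?s k w \<partial>P)" for k
    by (rule integral_grid_tilt_nonneg[OF f_meas h(1)])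
  moreover have "(\<lambda>k. \<integral>w. ?s k w \<partial>P)
      \<longlonglongrightarrow> (\<integral>w. h w * ((drift_dot l x w - \<delta>) / jump_mean x (f w) w) \<partial>P)"
  proof (rule integral_dominated_convergence[where w="\<lambda>_. B * ?c"])
    show "AE w in P. (\<lambda>k. ?s k w) \<longlonglongrightarrow> h w * ((drift_dot l x w - \<delta>) / jump_mean x (f w) w)"
      using AE_all
      by eventually_elim
        (auto intro!: tendsto_mult_left tendsto_divide tendsto_jump_mean_grid_approx)
    show "AE w in P. norm (?s k w) \<le> B * ?c" for k
      using AE_all
    proof eventually_elim
      case (elim w)
      let ?Sf = "jump_mean x (f w) w"
      have "?Sf \<le> ?S k w"
        using elim by (intro jump_mean_mono grid_approx_ge) auto
      then have "\<bar>(drift_dot l x w - \<delta>) / ?S k w\<bar> \<le> ?c / ?Sf"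
        using elim by (intro abs_drift_excess_div_le) auto
      then have "h w * \<bar>(drift_dot l x w - \<delta>) / ?S k w\<bar> \<le> (B * ?Sf) * (?c / ?Sf)"
        using elim by (intro mult_mono) auto
      also have "\<dots> = B * ?c" using elim by simp
      finally show ?case using elim by (simp add: abs_mult)
    qed
  qed simp_all
  ultimately show ?thesis by (intro LIMSEQ_le_const) auto
qed

lemma AE_green_bounds:
  assumes "finite U" "x \<in> U"
  shows "AE w in P. 0 \<le> green w U x \<and> green w U x \<le> real (card U) / \<kappa> ^ card U"
  using AE_elliptic by eventually_elim (use green_nonneg green_le assms in blast)

lemma integrable_green_mult:
  assumes "finite U" "x \<in> U" "\<phi> \<in> borel_measurable P" "AE w in P. \<bar>\<phi> w\<bar> \<le> c"
  shows "integrable P (\<lambda>w. green w U x * \<phi> w)"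
proof (rule integrable_const_bound[where B="real (card U) / \<kappa> ^ card U * c"])
  show "AE w in P. norm (green w U x * \<phi> w) \<le> real (card U) / \<kappa> ^ card U * c"
    using AE_green_bounds[OF assms(1,2)] assms(4)
  proof eventually_elim
    case (elim w)
    then have "green w U x * \<bar>\<phi> w\<bar> \<le> real (card U) / \<kappa> ^ card U * c"
      by (intro mult_mono) auto
    then show ?case using elim by (simp add: abs_mult)
  qed
qed (use assms(3) in measurable)

lemma measurable_escape_prob [measurable]: "(\<lambda>w. escape_prob w U x) \<in> borel_measurable P"
  unfolding escape_prob_def
  by (intro measurable_jump_mean borel_measurable_diff borel_measurable_const
      measurable_P_of_Fsig[OF measurable_hit_prob_Fsig])

lemma integral_green_excess_nonneg:
  assumes U: "finite U" "x \<in> U" and C: "C \<in> sets (Fsig (- {x}))"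
  shows "0 \<le> (\<integral>w. indicator C w * (green w U x * (drift_dot l x w - \<delta>)) \<partial>P)"
proof -
  let ?h = "\<lambda>w. indicator C w * hit_prob w U x 0"
  have "0 \<le> (\<integral>w. ?h w * ((drift_dot l x w - \<delta>) / escape_prob w U x) \<partial>P)"
    unfolding escape_prob_def
  proof (rule integral_random_tilt_nonneg[where B="real (card U) / \<kappa> ^ card U"])
    show "(\<lambda>w. 1 - hit_prob w U x (x + e)) \<in> borel_measurable (Fsig (- {x}))" for e
      by (intro borel_measurable_diff borel_measurable_const measurable_hit_prob_Fsig)
    show "?h \<in> borel_measurable (Fsig (- {x}))"
      by (intro borel_measurable_times borel_measurable_indicator C measurable_hit_prob_Fsig)
    show "AE w in P. (\<forall>e\<in>units. 0 \<le> 1 - hit_prob w U x (x + e) \<and> 1 - hit_prob w U x (x + e) \<le> 1)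
        \<and> 0 < jump_mean x (\<lambda>e. 1 - hit_prob w U x (x + e)) w"
      using AE_elliptic
      by eventually_elim (use escape_prob_pos[OF _ U] hit_prob_nonneg hit_prob_le_one U
          in \<open>auto simp: elliptic_along_def escape_prob_def\<close>)
    show "AE w in P. 0 \<le> ?h w \<and> ?h w \<le> real (card U) / \<kappa> ^ card U
        * jump_mean x (\<lambda>e. 1 - hit_prob w U x (x + e)) w"
      using AE_elliptic
    proof eventually_elim
      case (elim w)
      have "0 \<le> hit_prob w U x 0"
        using elim U(1) by (intro hit_prob_nonneg) (simp_all add: elliptic_along_def)
      with hit_prob_le_green_bound_mult_escape_prob[OF elim U] show ?case
        unfolding escape_prob_def by (auto simp: indicator_def)
    qed
  qed
  also have "\<dots> = (\<integral>w. indicator C w * (green w U x * (drift_dot l x w - \<delta>)) \<partial>P)"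
    using AE_elliptic sets_P_of_Fsig[OF C] measurable_P_of_Fsig[OF measurable_hit_prob_Fsig]
    by (intro integral_cong_AE) (measurable, auto simp: green_eq_hit_prob_div_escape_prob U)
  finally show ?thesis .
qed

lemma cond_exp_green_excess_nonneg:
  assumes U: "finite U" "x \<in> U"
  shows "AE w in P. 0 \<le> real_cond_exp P (Fsig (- U)) (\<lambda>w. green w U x * (drift_dot l x w - \<delta>)) w"
proof -
  interpret sigma_finite_subalgebra P "Fsig (- U)" by (rule sigma_finite_subalgebra_Fsig)
  show ?thesis
  proof (rule real_cond_exp_nonneg_of_integrals_nonneg)
    show "integrable P (\<lambda>w. green w U x * (drift_dot l x w - \<delta>))"
      using AE_abs_drift_excess_le by (intro integrable_green_mult[OF U]) simp_all
    fix C
    assume "C \<in> sets (Fsig (- U))"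
    then have "C \<in> sets (Fsig (- {x}))" using sets_Fsig_mono[of "- U" "- {x}"] U by auto
    then show "0 \<le> (\<integral>w. indicator C w * (green w U x * (drift_dot l x w - \<delta>)) \<partial>P)"
      by (rule integral_green_excess_nonneg[OF U])
  qed
qed

lemma kalikow_drift_dot_eq:
  assumes U: "finite U" "x \<in> U"
  shows "AE w in P. kalikow_drift_dot P l U x w
    = real_cond_exp P (Fsig (- U)) (\<lambda>w. green w U x * drift_dot l x w) w
      / real_cond_exp P (Fsig (- U)) (\<lambda>w. green w U x) w"
proof -
  interpret sigma_finite_subalgebra P "Fsig (- U)" by (rule sigma_finite_subalgebra_Fsig)
  let ?E = "real_cond_exp P (Fsig (- U))" and ?c = "\<lambda>e. real_of_int (dotZ e l)"
  \<comment> \<open>\<open>real_cond_exp_sum\<close> needs every summand integrable, so coordinates off \<open>units\<close> are cut off.\<close>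
  define t where "t e w = green w U x * (if e \<in> units then w x e else 0)" for e w
  have int_t: "integrable P (t e)" for e
    unfolding t_def using AE_stochastic
    by (intro integrable_green_mult[OF U, where c=1])
       (auto elim!: eventually_mono simp: stochastic_env_nonneg stochastic_env_le_one)
  have "(\<lambda>w. green w U x * drift_dot l x w) = (\<lambda>w. \<Sum>e\<in>units. ?c e * t e w)"
    by (simp add: t_def drift_dot_def sum_distrib_left mult.left_commute)
  then have "AE w in P. ?E (\<lambda>w. green w U x * drift_dot l x w) w = (\<Sum>e\<in>units. ?E (\<lambda>w. ?c e * t e w) w)"
    using real_cond_exp_sum[OF integrable_mult_right[OF int_t]] by simp
  moreover have "AE w in P. \<forall>e\<in>units. ?E (\<lambda>w. ?c e * t e w) w = ?c e * ?E (t e) w"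
    using real_cond_exp_cmult[OF int_t] by (simp add: AE_ball_countable countable_finite)
  ultimately show ?thesis
  proof eventually_elim
    case (elim w)
    have "t e = (\<lambda>w. green w U x * w x e)" if "e \<in> units" for e
      using that by (simp add: t_def fun_eq_iff)
    then show ?case using elim
      by (simp add: kalikow_drift_dot_def kalikowP_def sum_divide_distrib)
  qed
qed

lemma kalikow_drift_dot_ge:
  assumes U: "finite U" "nn_connected U" "0 \<in> U" "x \<in> U"
  shows "AE w in P. \<delta> \<le> kalikow_drift_dot P l U x w"
proof -
  interpret sigma_finite_subalgebra P "Fsig (- U)" by (rule sigma_finite_subalgebra_Fsig)
  let ?E = "real_cond_exp P (Fsig (- U))" and ?g = "\<lambda>w. green w U x"
  have int_g: "integrable P ?g"
    using integrable_green_mult[OF U(1,4), of "\<lambda>_. 1" 1] by simp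
  have int_gD: "integrable P (\<lambda>w. ?g w * drift_dot l x w)"
    using AE_abs_drift_excess_le[of x 0] by (intro integrable_green_mult[OF U(1,4)]) simp_all
  have "AE w in P. ?E (\<lambda>w. ?g w * drift_dot l x w - \<delta> * ?g w) w
      = ?E (\<lambda>w. ?g w * drift_dot l x w) w - ?E (\<lambda>w. \<delta> * ?g w) w"
    by (rule real_cond_exp_diff[OF int_gD integrable_mult_right[OF int_g]])
  moreover have "AE w in P. ?E (\<lambda>w. \<delta> * ?g w) w = \<delta> * ?E ?g w"
    by (rule real_cond_exp_cmult[OF int_g])
  moreover have "AE w in P. 0 \<le> ?E (\<lambda>w. ?g w * drift_dot l x w - \<delta> * ?g w) w"
    using cond_exp_green_excess_nonneg[OF U(1,4)] by (simp add: algebra_simps)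
  moreover have "AE w in P. 0 < ?E ?g w"
    using AE_elliptic AE_positive
    by (intro real_cond_exp_gr_c int_g) (auto elim!: eventually_elim2 intro: green_pos[OF _ _ U])
  moreover note kalikow_drift_dot_eq[OF U(1,4)]
  ultimately show ?thesis
    by eventually_elim (simp add: le_divide_eq)
qed

lemma AE_kalikow_condition:
  "AE w in P. \<forall>U. finite U \<and> nn_connected U \<and> 0 \<in> U \<longrightarrow> (\<forall>x\<in>U. \<delta> \<le> kalikow_drift_dot P l U x w)"
proof -
  have "AE w in P. \<forall>U\<in>{U. finite U}. nn_connected U \<and> 0 \<in> U \<longrightarrow>
      (\<forall>x\<in>U. \<delta> \<le> kalikow_drift_dot P l U x w)"
  proof (rule AE_ball_countable')
    fix U :: "'d site set"
    assume "U \<in> {U. finite U}"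
    then have "AE w in P. \<forall>x\<in>U. nn_connected U \<and> 0 \<in> U \<longrightarrow> \<delta> \<le> kalikow_drift_dot P l U x w"
      by (intro AE_ball_countable' countable_finite) (auto intro: kalikow_drift_dot_ge)
    then show "AE w in P. nn_connected U \<and> 0 \<in> U \<longrightarrow> (\<forall>x\<in>U. \<delta> \<le> kalikow_drift_dot P l U x w)"
      by (auto elim!: eventually_mono)
  qed (rule countable_Collect_finite)
  then show ?thesis by (auto elim!: eventually_mono)
qed

end

theorem lemma5p16:
  fixes P :: "'d::finite env measure" and l :: "'d site" and \<kappa> \<delta> :: real
  assumes prob: "prob_space P" and sets_P: "sets P = sets Omega_M"
    and stat: "stationary P" and erg: "ergodic P"
    and simplex: "AE w in P. \<forall>z. (\<forall>e\<in>units. 0 \<le> w z e) \<and> (\<Sum>e\<in>units. w z e) = 1"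
    and l_nz: "l \<noteq> 0"
    and A2_pos: "AE w in P. \<forall>e\<in>units. w 0 e > 0"
    and kappa_pos: "\<kappa> > 0"
    and A2_kappa: "AE w in P. \<forall>e\<in>Edirs l. w 0 e \<ge> \<kappa>"
    and delta_pos: "\<delta> > 0"
    and hyp: "\<And>x f. (\<forall>e\<in>units. 0 < f e \<and> f e \<le> (1::real)) \<Longrightarrow>
       AE w in P.
         inverse (real_cond_exp P (Fsig (- {x}))
                    (\<lambda>w'. 1 / (\<Sum>e\<in>units. f e * w' x e)) w)
         * real_cond_exp P (Fsig (- {x}))
                    (\<lambda>w'. drift_dot l x w' / (\<Sum>e\<in>units. f e * w' x e)) w
         \<ge> \<delta>"
  shows "AE w in P. \<forall>U. finite U \<and> nn_connected U \<and> 0 \<in> U \<longrightarrow>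
           (\<forall>x\<in>U. kalikow_drift_dot P l U x w \<ge> \<delta>)"
proof -
  obtain e\<^sub>0 where e\<^sub>0: "e\<^sub>0 \<in> Edirs l" using Edirs_nonempty[OF l_nz] by blast
  note measurable_env_coord[of 0, measurable]
  have positive: "AE w in P. \<forall>z. \<forall>e\<in>units. 0 < w z e"
    by (rule AE_all_sites_of_stationary[OF sets_P stat _ A2_pos]) measurable
  have elliptic: "AE w in P. elliptic_along w e\<^sub>0 \<kappa>"
  proof -
    have "AE w in P. \<forall>z. \<forall>e\<in>Edirs l. \<kappa> \<le> w z e"
      by (rule AE_all_sites_of_stationary[OF sets_P stat _ A2_kappa])
         (use finite_subset[OF Edirs_subset_units] in measurable)
    with simplex show ?thesis
    proof eventually_elim
      case (elim w)
      then show ?case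
        using e\<^sub>0 Edirs_subset_units[of l] kappa_pos by (auto simp: elliptic_along_def stochastic_env_def)
    qed
  qed
  interpret tilted_drift_condition P l \<delta> \<kappa> e\<^sub>0
    by (rule tilted_drift_condition.intro[OF prob sets_P elliptic positive hyp[folded jump_mean_def]])
  show ?thesis by (rule AE_kalikow_condition)
qed

end
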